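(* Let $f:X\to Y$ be a continuous map between $T_0$-spaces. Then $f$ is locally closed if and only if the frame morphism $\Omega f=f^{-1}:\Omega Y\to\Omega X$ is a D-morphism.
   Context: $\Omega X$ is the frame of open sets of a space $X$. A point $x\in X$ is locally closed if $\{x\}$ is closed in some open neighborhood of $x$. A continuous map is locally closed if it maps locally closed points to locally closed points. For a frame $L$ and elements $a<b$, $a\lessdot b$ means there is no $x$ with $a<x<b$. A filter $F$ of a frame $L$ is slicing if it is prime and there exist $b\in F$, $a\notin F$ with $a\lessdot b$. A frame morphism $h:L\to M$ is a D-morphism if $h^{-1}(F)$ is a slicing filter of $L$ for every slicing filter $F$ of $M$. *)

theory Defs
  imports "HOL-Analysis.Analysis"
begin

text \<open>The frame Omega X of open sets of X, ordered by inclusion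
  (meets are intersections, binary joins are unions, top is topspace X).\<close>

definition Omega :: "'a topology \<Rightarrow> 'a set set" where
  "Omega X = {U. openin X U}"

definition locally_closed_point :: "'a topology \<Rightarrow> 'a \<Rightarrow> bool" where
  "locally_closed_point X x \<longleftrightarrow> x \<in> topspace X \<and>
     (\<exists>U. openin X U \<and> x \<in> U \<and> closedin (subtopology X U) {x})"

definition locally_closed_map :: "'a topology \<Rightarrow> 'b topology \<Rightarrow> ('a \<Rightarrow> 'b) \<Rightarrow> bool" where
  "locally_closed_map X Y f \<longleftrightarrow>
     (\<forall>x. locally_closed_point X x \<longrightarrow> locally_closed_point Y (f x))"

definition frame_filter :: "'a topology \<Rightarrow> 'a set set \<Rightarrow> bool" where
  "frame_filter X F \<longleftrightarrow> F \<subseteq> Omega X \<and> F \<noteq> {} \<and>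
     (\<forall>U\<in>F. \<forall>V\<in>F. U \<inter> V \<in> F) \<and>
     (\<forall>U\<in>F. \<forall>V\<in>Omega X. U \<subseteq> V \<longrightarrow> V \<in> F)"

definition prime_frame_filter :: "'a topology \<Rightarrow> 'a set set \<Rightarrow> bool" where
  "prime_frame_filter X F \<longleftrightarrow> frame_filter X F \<and> {} \<notin> F \<and>
     (\<forall>U\<in>Omega X. \<forall>V\<in>Omega X. U \<union> V \<in> F \<longrightarrow> U \<in> F \<or> V \<in> F)"

definition frame_covers :: "'a topology \<Rightarrow> 'a set \<Rightarrow> 'a set \<Rightarrow> bool" where
  "frame_covers X a b \<longleftrightarrow> a \<in> Omega X \<and> b \<in> Omega X \<and> a \<subset> b \<and>
     \<not> (\<exists>c\<in>Omega X. a \<subset> c \<and> c \<subset> b)"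

definition slicing_filter :: "'a topology \<Rightarrow> 'a set set \<Rightarrow> bool" where
  "slicing_filter X F \<longleftrightarrow> prime_frame_filter X F \<and>
     (\<exists>b\<in>F. \<exists>a\<in>Omega X. a \<notin> F \<and> frame_covers X a b)"

definition Omega_map :: "'a topology \<Rightarrow> ('a \<Rightarrow> 'b) \<Rightarrow> 'b set \<Rightarrow> 'a set" where
  "Omega_map X f V = f -` V \<inter> topspace X"

definition D_morphism :: "'b topology \<Rightarrow> 'a topology \<Rightarrow> ('b set \<Rightarrow> 'a set) \<Rightarrow> bool" where
  "D_morphism Y X h \<longleftrightarrow>
     (\<forall>F. slicing_filter X F \<longrightarrow> slicing_filter Y {V \<in> Omega Y. h V \<in> F})"

end

theory Submission
  imports Defs
begin

text \<open>In a \<open>T\<^sub>0\<close>-space the slicing filters of \<open>\<Omega> X\<close> are exactly the neighbourhood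
  filters of the locally closed points: a covering \<open>a \<lessdot> b\<close> of open sets differs by a single
  point \<open>x\<close>, and primeness forces the filter to be the neighbourhood filter of \<open>x\<close>.
  Since \<open>f\<^sup>-\<^sup>1\<close> pulls the neighbourhood filter of \<open>x\<close> back to that of \<open>f x\<close>, both
  directions of the theorem reduce to this correspondence.\<close>

definition nbhd_filter :: "'a topology \<Rightarrow> 'a \<Rightarrow> 'a set set" where
  "nbhd_filter X x = {U. openin X U \<and> x \<in> U}"

lemma nbhd_filter_inj_t0:
  assumes "t0_space X" "x \<in> topspace X" "y \<in> topspace X"
    and "nbhd_filter X x = nbhd_filter X y"
  shows "x = y"
proof (rule ccontr)
  assume "x \<noteq> y"
  then obtain W where "openin X W" "x \<notin> W \<longleftrightarrow> y \<in> W"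
    using assms(1-3) unfolding t0_space_def by blast
  then show False
    using assms(4) unfolding nbhd_filter_def by blast
qed

lemma locally_closed_point_iff_openin_Diff:
  "locally_closed_point X x \<longleftrightarrow>
     x \<in> topspace X \<and> (\<exists>U. openin X U \<and> x \<in> U \<and> openin X (U - {x}))"
proof -
  have "closedin (subtopology X U) {x} \<longleftrightarrow> openin X (U - {x})"
    if "openin X U" "x \<in> U" for U
  proof -
    have "topspace (subtopology X U) = U"
      using that openin_subset by auto
    then show ?thesis
      unfolding closedin_def using openin_open_subtopology[OF that(1), of "U - {x}"] that
      by auto
  qed
  then show ?thesis
    unfolding locally_closed_point_def by blast
qed

lemma slicing_filter_nbhd_filter:
  assumes "locally_closed_point X x"
  shows "slicing_filter X (nbhd_filter X x)"
proof -
  obtain U where U: "openin X U" "x \<in> U" "openin X (U - {x})" and "x \<in> topspace X"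
    using assms by (auto simp: locally_closed_point_iff_openin_Diff)
  then have "prime_frame_filter X (nbhd_filter X x)"
    unfolding prime_frame_filter_def frame_filter_def nbhd_filter_def Omega_def by auto
  moreover have "frame_covers X (U - {x}) U"
    unfolding frame_covers_def Omega_def using U by auto
  ultimately show ?thesis
    unfolding slicing_filter_def using U by (auto simp: nbhd_filter_def Omega_def)
qed

lemma frame_covers_Diff_singleton_t0:
  assumes "t0_space X" and "frame_covers X a b"
  obtains x where "x \<in> b" "a = b - {x}"
proof -
  have ab: "openin X a" "openin X b" "a \<subset> b"
    and no_between: "\<And>c. openin X c \<Longrightarrow> a \<subset> c \<Longrightarrow> c \<subset> b \<Longrightarrow> False"
    using assms(2) unfolding frame_covers_def Omega_def by auto
  obtain x where x: "x \<in> b" "x \<notin> a"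
    using ab(3) by auto
  have "b - a = {x}"
  proof (rule ccontr)
    assume "b - a \<noteq> {x}"
    then obtain y where y: "y \<in> b" "y \<notin> a" "y \<noteq> x"
      using x by auto
    have "x \<in> topspace X" "y \<in> topspace X"
      using ab(2) x y openin_subset by auto
    then obtain W where W: "openin X W" "x \<notin> W \<longleftrightarrow> y \<in> W"
      using assms(1) y(3) unfolding t0_space_def by metis
    \<comment> \<open>\<open>W\<close> separates \<open>x\<close> from \<open>y\<close>, so \<open>a \<union> (W \<inter> b)\<close> contains exactly one of them.\<close>
    have "openin X (a \<union> (W \<inter> b))"
      using W ab by auto
    moreover have "a \<subset> a \<union> (W \<inter> b)" "a \<union> (W \<inter> b) \<subset> b"
      using ab W x y by (cases "x \<in> W"; blast)+
    ultimately show False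
      using no_between by blast
  qed
  then show thesis
    using that x ab(3) by blast
qed

lemma prime_frame_filter_eq_nbhd_filter:
  assumes F: "prime_frame_filter X F"
    and b: "b \<in> F" "openin X b" "x \<in> b"
    and a: "openin X (b - {x})" "b - {x} \<notin> F"
  shows "F = nbhd_filter X x"
proof -
  have up: "\<And>U V. U \<in> F \<Longrightarrow> openin X V \<Longrightarrow> U \<subseteq> V \<Longrightarrow> V \<in> F"
    and meet: "\<And>U V. U \<in> F \<Longrightarrow> V \<in> F \<Longrightarrow> U \<inter> V \<in> F"
    and opens: "\<And>U. U \<in> F \<Longrightarrow> openin X U"
    and prime: "\<And>U V. openin X U \<Longrightarrow> openin X V \<Longrightarrow> U \<union> V \<in> F \<Longrightarrow> U \<in> F \<or> V \<in> F"
    using F unfolding prime_frame_filter_def frame_filter_def Omega_def by auto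
  show ?thesis
  proof (intro equalityI subsetI)
    fix V assume V: "V \<in> F"
    have "x \<in> V"
    proof (rule ccontr)
      assume "x \<notin> V"
      then have "V \<inter> b \<subseteq> b - {x}" by auto
      moreover have "V \<inter> b \<in> F" using meet V b by auto
      ultimately show False using up a by blast
    qed
    then show "V \<in> nbhd_filter X x"
      using opens V by (auto simp: nbhd_filter_def)
  next
    fix V assume "V \<in> nbhd_filter X x"
    then have V: "openin X V" "x \<in> V" by (auto simp: nbhd_filter_def)
    then have "(b - {x}) \<union> (V \<inter> b) = b"
      using b(3) by auto
    then have "(b - {x}) \<union> (V \<inter> b) \<in> F"
      using b(1) by simp
    then have "V \<inter> b \<in> F"
      using prime a V b by blast
    then show "V \<in> F"
      using up V by blast
  qed
qed

lemma slicing_filter_eq_nbhd_filter_t0: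
  assumes "t0_space X" and "slicing_filter X F"
  obtains x where "locally_closed_point X x" "F = nbhd_filter X x"
proof -
  obtain a b where F: "prime_frame_filter X F" and b: "b \<in> F" and a: "a \<notin> F"
    and cov: "frame_covers X a b"
    using assms(2) unfolding slicing_filter_def by blast
  obtain x where x: "x \<in> b" "a = b - {x}"
    using frame_covers_Diff_singleton_t0[OF assms(1) cov] by blast
  have open_ab: "openin X a" "openin X b"
    using cov unfolding frame_covers_def Omega_def by auto
  moreover have "x \<in> topspace X"
    using open_ab(2) x(1) openin_subset by auto
  ultimately have "locally_closed_point X x"
    using x unfolding locally_closed_point_iff_openin_Diff by auto
  moreover have "F = nbhd_filter X x"
    using prime_frame_filter_eq_nbhd_filter[OF F b open_ab(2) x(1)] open_ab(1) a x(2) by blast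
  ultimately show thesis
    using that by blast
qed

lemma slicing_nbhd_filter_iff_locally_closed_point_t0:
  assumes "t0_space X" and "x \<in> topspace X"
  shows "slicing_filter X (nbhd_filter X x) \<longleftrightarrow> locally_closed_point X x"
proof
  assume "slicing_filter X (nbhd_filter X x)"
  then obtain y where y: "locally_closed_point X y" "nbhd_filter X x = nbhd_filter X y"
    using slicing_filter_eq_nbhd_filter_t0[OF assms(1)] by metis
  then have "x = y"
    using nbhd_filter_inj_t0 assms by (metis locally_closed_point_def)
  then show "locally_closed_point X x"
    using y(1) by simp
qed (rule slicing_filter_nbhd_filter)

lemma Omega_map_preimage_nbhd_filter:
  assumes "continuous_map X Y f" and "x \<in> topspace X"
  shows "{V \<in> Omega Y. Omega_map X f V \<in> nbhd_filter X x} = nbhd_filter Y (f x)"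
  using assms unfolding nbhd_filter_def Omega_def Omega_map_def continuous_map_def
  by (auto simp: Collect_conj_eq Int_commute vimage_def)

theorem proposition5p10:
  fixes X :: "'a topology" and Y :: "'b topology" and f :: "'a \<Rightarrow> 'b"
  assumes "t0_space X" and "t0_space Y" and "continuous_map X Y f"
  shows "locally_closed_map X Y f \<longleftrightarrow> D_morphism Y X (Omega_map X f)"
proof
  assume lcm: "locally_closed_map X Y f"
  show "D_morphism Y X (Omega_map X f)"
    unfolding D_morphism_def
  proof (intro allI impI)
    fix F assume "slicing_filter X F"
    then obtain x where x: "locally_closed_point X x" "F = nbhd_filter X x"
      using slicing_filter_eq_nbhd_filter_t0[OF assms(1)] by blast
    then have "{V \<in> Omega Y. Omega_map X f V \<in> F} = nbhd_filter Y (f x)"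
      using Omega_map_preimage_nbhd_filter[OF assms(3)] by (simp add: locally_closed_point_def)
    then show "slicing_filter Y {V \<in> Omega Y. Omega_map X f V \<in> F}"
      using slicing_filter_nbhd_filter lcm x(1) unfolding locally_closed_map_def by metis
  qed
next
  assume D: "D_morphism Y X (Omega_map X f)"
  show "locally_closed_map X Y f"
    unfolding locally_closed_map_def
  proof (intro allI impI)
    fix x assume x: "locally_closed_point X x"
    then have "x \<in> topspace X"
      by (simp add: locally_closed_point_def)
    moreover have "slicing_filter Y {V \<in> Omega Y. Omega_map X f V \<in> nbhd_filter X x}"
      using D slicing_filter_nbhd_filter[OF x] unfolding D_morphism_def by blast
    ultimately have "slicing_filter Y (nbhd_filter Y (f x))"
      using Omega_map_preimage_nbhd_filter[OF assms(3)] by simp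
    moreover have "f x \<in> topspace Y"
      using assms(3) \<open>x \<in> topspace X\<close> by (meson continuous_map_def funcset_mem)
    ultimately show "locally_closed_point Y (f x)"
      using slicing_nbhd_filter_iff_locally_closed_point_t0[OF assms(2)] by blast
  qed
qed

end
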